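(* Let $u\geq 1$, $a=(-u,-1)$, $b=(u,1)$, $s(x)=-x/u$, and fix $x<-u$. Then for all $p\neq 0$ close enough to zero, whenever $y_p>1$ and $(x,y_p)\in B_p(a,b)$, we have $y_p<2\,s(x)+3$.
   Context: For $p\neq 0$ and $(x,y)\in\mathbb{R}^2$ let $L_p((x,y))=(|x|^p+|y|^p)^{1/p}$; for $p<0$ this is extended by setting $L_p((x,y))=0$ whenever $x=0$ or $y=0$. The bisector is $B_p(a,b)=\{q\in\mathbb{R}^2: L_p(a-q)=L_p(b-q)\}$. *)

theory Defs
  imports Complex_Main
begin

definition Lp :: "real \<Rightarrow> real \<times> real \<Rightarrow> real" where
  "Lp p q = (if p < 0 \<and> (fst q = 0 \<or> snd q = 0) then 0
             else (\<bar>fst q\<bar> powr p + \<bar>snd q\<bar> powr p) powr (1 / p))"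

definition bisector :: "real \<Rightarrow> real \<times> real \<Rightarrow> real \<times> real \<Rightarrow> (real \<times> real) set" where
  "bisector p a b = {q. Lp p (fst a - fst q, snd a - snd q) = Lp p (fst b - fst q, snd b - snd q)}"

end

theory Submission
  imports Defs
begin

text \<open>
  For \<open>x < -u\<close> and \<open>y > 1\<close> the bisector equation reads
  \<open>\<alpha>\<^sup>p + (y+1)\<^sup>p = \<beta>\<^sup>p + (y-1)\<^sup>p\<close> with \<open>\<alpha> = -u-x\<close>, \<open>\<beta> = u-x\<close>, i.e.
  \<open>h\<^sub>p(y) = (\<beta>\<^sup>p - \<alpha>\<^sup>p)/p\<close> where \<open>h\<^sub>p(t) = ((t+1)\<^sup>p - (t-1)\<^sup>p)/p\<close> is nonincreasing
  for \<open>p < 1\<close>. As \<open>p \<rightarrow> 0\<close> the right side tends to \<open>ln(\<beta>/\<alpha>)\<close> and \<open>h\<^sub>p(Y)\<close> to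
  \<open>ln((Y+1)/(Y-1))\<close>; for \<open>Y = 2 s(x) + 3\<close> one checks \<open>\<alpha>(Y+1) < \<beta>(Y-1)\<close>, so for
  small \<open>p\<close> we get \<open>h\<^sub>p(y) > h\<^sub>p(Y)\<close>, forcing \<open>y < Y\<close>.
\<close>

lemma powr_difference_quotient_tendsto:
  fixes a b :: real
  assumes "a > 0" "b > 0"
  shows "((\<lambda>p. (b powr p - a powr p) / p) \<longlongrightarrow> ln b - ln a) (at 0)"
proof -
  have "((\<lambda>p. b powr p - a powr p) has_real_derivative ln b - ln a) (at 0)"
    using assms by (auto intro!: derivative_eq_intros)
  then show ?thesis
    using assms by (simp add: has_field_derivative_iff)
qed

lemma powr_central_difference_antimono:
  fixes p c s t :: real
  assumes "p < 1" "p \<noteq> 0" "c > 0" "c < s" "s \<le> t"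
  shows "((t + c) powr p - (t - c) powr p) / p \<le> ((s + c) powr p - (s - c) powr p) / p"
proof (rule DERIV_nonpos_imp_nonincreasing[OF \<open>s \<le> t\<close>])
  fix r assume "s \<le> r" "r \<le> t"
  then have "r - c > 0" using assms by linarith
  have "((\<lambda>r. ((r + c) powr p - (r - c) powr p) / p) has_real_derivative
          (r + c) powr (p - 1) - (r - c) powr (p - 1)) (at r)"
    using \<open>r - c > 0\<close> \<open>c > 0\<close> \<open>p \<noteq> 0\<close>
    by (auto intro!: derivative_eq_intros simp: field_simps)
  moreover have "(r + c) powr (p - 1) \<le> (r - c) powr (p - 1)"
    using powr_less_mono2_neg[of "p - 1" "r - c" "r + c"] \<open>r - c > 0\<close> assms by simp
  ultimately show "\<exists>D. ((\<lambda>r. ((r + c) powr p - (r - c) powr p) / p) has_real_derivative D) (at r) \<and> D \<le> 0"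
    by auto
qed

lemma Lp_eq_iff_powr_sums_eq:
  fixes p a b c d :: real
  assumes "p \<noteq> 0" "a \<noteq> 0" "b \<noteq> 0" "c \<noteq> 0" "d \<noteq> 0"
  shows "Lp p (a, b) = Lp p (c, d) \<longleftrightarrow> \<bar>a\<bar> powr p + \<bar>b\<bar> powr p = \<bar>c\<bar> powr p + \<bar>d\<bar> powr p"
proof
  assume "Lp p (a, b) = Lp p (c, d)"
  then have "((\<bar>a\<bar> powr p + \<bar>b\<bar> powr p) powr (1 / p)) powr p =
             ((\<bar>c\<bar> powr p + \<bar>d\<bar> powr p) powr (1 / p)) powr p"
    using assms by (simp add: Lp_def)
  then show "\<bar>a\<bar> powr p + \<bar>b\<bar> powr p = \<bar>c\<bar> powr p + \<bar>d\<bar> powr p"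
    using assms by (simp add: powr_powr)
qed (use assms in \<open>simp add: Lp_def\<close>)

lemma eventually_powr_sums_eq_imp_less:
  fixes \<alpha> \<beta> Y :: real
  assumes "\<alpha> > 0" "\<beta> > 0" "Y > 1" "\<alpha> * (Y + 1) < \<beta> * (Y - 1)"
  shows "\<forall>\<^sub>F p in at 0. \<forall>y>1. \<alpha> powr p + (y + 1) powr p = \<beta> powr p + (y - 1) powr p \<longrightarrow> y < Y"
proof -
  have lim: "((\<lambda>p. (\<beta> powr p - \<alpha> powr p) / p - ((Y + 1) powr p - (Y - 1) powr p) / p)
          \<longlongrightarrow> (ln \<beta> - ln \<alpha>) - (ln (Y + 1) - ln (Y - 1))) (at 0)"
    using assms by (intro tendsto_diff powr_difference_quotient_tendsto) auto
  have "ln (\<alpha> * (Y + 1)) < ln (\<beta> * (Y - 1))"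
    using assms by simp
  then have gap: "(ln \<beta> - ln \<alpha>) - (ln (Y + 1) - ln (Y - 1)) > 0"
    using assms by (simp add: ln_mult)
  have "\<forall>\<^sub>F p in at 0. ((Y + 1) powr p - (Y - 1) powr p) / p < (\<beta> powr p - \<alpha> powr p) / p"
    using order_tendstoD(1)[OF lim gap] by simp
  moreover have "\<forall>\<^sub>F p in at 0. p < (1::real)"
    by (rule order_tendstoD(2)[OF tendsto_ident_at]) simp
  moreover have "\<forall>\<^sub>F p in at 0. p \<noteq> (0::real)"
    by (rule eventually_neq_at_within)
  ultimately show ?thesis
  proof eventually_elim
    case (elim p)
    show ?case
    proof (intro allI impI)
      fix y :: real
      assume "y > 1" and eq: "\<alpha> powr p + (y + 1) powr p = \<beta> powr p + (y - 1) powr p"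
      show "y < Y"
      proof (rule ccontr)
        assume "\<not> y < Y"
        then have "((y + 1) powr p - (y - 1) powr p) / p \<le> ((Y + 1) powr p - (Y - 1) powr p) / p"
          using powr_central_difference_antimono[of p 1 Y y] elim assms by simp
        moreover have "(y + 1) powr p - (y - 1) powr p = \<beta> powr p - \<alpha> powr p"
          using eq by simp
        ultimately show False
          using elim by simp
      qed
    qed
  qed
qed

theorem lemma7:
  fixes u x :: real
  assumes "u \<ge> 1" and "x < - u"
  shows "\<exists>\<delta>>0. \<forall>p. p \<noteq> 0 \<and> \<bar>p\<bar> < \<delta> \<longrightarrow>
           (\<forall>y. y > 1 \<and> (x, y) \<in> bisector p (- u, - 1) (u, 1) \<longrightarrow> y < 2 * (- x / u) + 3)"
proof -
  define Y where "Y = 2 * (- x / u) + 3"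
  have "u * Y = 3 * u - 2 * x"
    using assms by (simp add: Y_def field_simps)
  then have "(- u - x) * (Y + 1) < (u - x) * (Y - 1)"
    using assms by (simp add: algebra_simps)
  moreover have "Y > 1"
    using assms by (simp add: Y_def field_simps)
  ultimately have "\<forall>\<^sub>F p in at 0. \<forall>y>1.
      (- u - x) powr p + (y + 1) powr p = (u - x) powr p + (y - 1) powr p \<longrightarrow> y < Y"
    using assms by (intro eventually_powr_sums_eq_imp_less) auto
  then obtain \<delta> where "\<delta> > 0" and \<delta>: "\<And>p y. p \<noteq> 0 \<Longrightarrow> \<bar>p\<bar> < \<delta> \<Longrightarrow> y > 1 \<Longrightarrow>
      (- u - x) powr p + (y + 1) powr p = (u - x) powr p + (y - 1) powr p \<Longrightarrow> y < Y"
    unfolding eventually_at by auto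
  have "y < Y" if "p \<noteq> 0" "\<bar>p\<bar> < \<delta>" "y > 1" "(x, y) \<in> bisector p (- u, - 1) (u, 1)" for p y
  proof (rule \<delta>[OF that(1-3)])
    have "Lp p (- u - x, - 1 - y) = Lp p (u - x, 1 - y)"
      using that(4) by (simp add: bisector_def)
    then show "(- u - x) powr p + (y + 1) powr p = (u - x) powr p + (y - 1) powr p"
      using that assms by (subst (asm) Lp_eq_iff_powr_sums_eq) auto
  qed
  then show ?thesis
    using \<open>\<delta> > 0\<close> unfolding Y_def by blast
qed

end
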